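(* Let $D\mathcal{M}$ be a $\bar{\ell c}$DCB$_1$ system. Then for every $\theta\in C([-\tau,0];\mathbb{R}^n_{>0})$, the stoichiometric compatibility class $\mathcal P_\theta$ of $D\mathcal{M}$ contains exactly one positive equilibrium of $D\mathcal{M}$.
   Context: For $x,y\in\mathbb{R}^n$ with $x\ge 0$, write $x^{y}=\prod_{j=1}^n x_j^{y_j}$. A delayed mass-action system on species $X_1,\dots,X_n$ consists of reactions $R_i: y_{\cdot i}\to y'_{\cdot i}$, $i=1,\dots,r$, with complexes $y_{\cdot i},y'_{\cdot i}\in\mathbb{R}^n_{\ge0}$, rate constants $\kappa_i>0$ and delays $\tau_i\ge0$; with $\tau\ge\max_i\tau_i$, its dynamics is the delay differential equation $\dot x(t)=\sum_{i=1}^r\kappa_i\big[x(t-\tau_i)^{y_{\cdot i}}y'_{\cdot i}-x(t)^{y_{\cdot i}}y_{\cdot i}\big]$, $t\ge 0$, with initial function $\theta\in C([-\tau,0];\mathbb{R}^n_{\ge0})$. Its stoichiometric subspace is $\mathscr S=\mathrm{span}\{y'_{\cdot i}-y_{\cdot i}\}$. A positive equilibrium is $x^*\in\mathbb{R}^n_{>0}$ with $\sum_i\kappa_i (x^* )^{y_{\cdot i}}(y'_{\cdot i}-y_{\cdot i})=0$ (viewed as a constant function). The stoichiometric compatibility class containing $\theta$ is $\mathcal P_\theta=\{\psi\in C([-\tau,0];\mathbb{R}^n_{\ge0}): c_a(\psi)=c_a(\theta)\ \forall a\in\mathscr S^\perp\}$, where $c_a(\psi)=a^\top\big[\psi(0)+\sum_{i=1}^r\big(\kappa_i\int_{-\tau_i}^0\psi(s)^{y_{\cdot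 i}}ds\big)y_{\cdot i}\big]$. A vector $\bar x\in\mathbb{R}^n_{>0}$ is a complex balanced equilibrium if for every complex $\eta$ of the network $\sum_{i: y_{\cdot i}=\eta}\kappa_i\bar x^{y_{\cdot i}}=\sum_{i: y'_{\cdot i}=\eta}\kappa_i\bar x^{y_{\cdot i}}$; a complex balanced system is a mass-action system admitting a positive complex balanced equilibrium. A delayed mass-action system $D\mathcal{M}$ with reactions $y_{\cdot i}\to y_{\cdot i}+v_{\cdot i}$, rate constants $\kappa_i$, delays $\tau_i$ ($i=1,\dots,r$) is a $\bar{\ell c}$DCB$_1$ system if there is a complex balanced mass-action system $\tilde{\mathcal{M}}$ on the same species with exactly $r$ reactions $y_{\cdot i}\to y_{\cdot i}+\tilde v_{\cdot i}$ (same reactant complexes) and rate constants $\tilde\kappa_i>0$, such that for each $i$, $v_{\cdot i}=b_i\tilde v_{\cdot i}$ with $b_i=\tilde\kappa_i/\kappa_i\le 1$. *)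

theory Defs
  imports "HOL-Analysis.Analysis"
begin

text \<open>Species are indexed by a finite type 'n (so states live in real^'n),
reactions by a finite type 'r.  A reaction i has reactant complex y i and
reaction vector v i, i.e. product complex y i + v i.\<close>

definition nonneg_vec :: "real^'n \<Rightarrow> bool" where
  "nonneg_vec x \<longleftrightarrow> (\<forall>j. 0 \<le> x $ j)"

definition pos_vec :: "real^'n \<Rightarrow> bool" where
  "pos_vec x \<longleftrightarrow> (\<forall>j. 0 < x $ j)"

text \<open>Monomial x^y = prod_j x_j^(y_j), with the convention 0^0 = 1.\<close>
definition mpow :: "real^'n::finite \<Rightarrow> real^'n \<Rightarrow> real" where
  "mpow x y = (\<Prod>j\<in>UNIV. (if y $ j = 0 then 1 else (x $ j) powr (y $ j)))"

definition delayed_mas ::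
  "('r::finite \<Rightarrow> real) \<Rightarrow> ('r \<Rightarrow> real) \<Rightarrow> ('r \<Rightarrow> real^'n::finite) \<Rightarrow> ('r \<Rightarrow> real^'n) \<Rightarrow> bool" where
  "delayed_mas \<kappa> \<tau>d y v \<longleftrightarrow>
     (\<forall>i. 0 < \<kappa> i \<and> 0 \<le> \<tau>d i \<and> nonneg_vec (y i) \<and> nonneg_vec (y i + v i))"

definition stoich_subspace :: "('r::finite \<Rightarrow> real^'n::finite) \<Rightarrow> (real^'n) set" where
  "stoich_subspace v = span (range v)"

definition c_fun ::
  "('r::finite \<Rightarrow> real) \<Rightarrow> ('r \<Rightarrow> real) \<Rightarrow> ('r \<Rightarrow> real^'n::finite) \<Rightarrow> real^'n
     \<Rightarrow> (real \<Rightarrow> real^'n) \<Rightarrow> real" where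
  "c_fun \<kappa> \<tau>d y a \<psi> =
     a \<bullet> (\<psi> 0 + (\<Sum>i\<in>UNIV. (\<kappa> i * integral {- \<tau>d i..0} (\<lambda>s. mpow (\<psi> s) (y i))) *\<^sub>R y i))"

definition compat_class ::
  "('r::finite \<Rightarrow> real) \<Rightarrow> ('r \<Rightarrow> real) \<Rightarrow> ('r \<Rightarrow> real^'n::finite) \<Rightarrow> ('r \<Rightarrow> real^'n)
     \<Rightarrow> real \<Rightarrow> (real \<Rightarrow> real^'n) \<Rightarrow> (real \<Rightarrow> real^'n) set" where
  "compat_class \<kappa> \<tau>d y v \<tau> \<theta> =
     {\<psi>. continuous_on {-\<tau>..0} \<psi> \<and> (\<forall>s\<in>{-\<tau>..0}. nonneg_vec (\<psi> s)) \<and>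
          (\<forall>a. (\<forall>w\<in>stoich_subspace v. a \<bullet> w = 0) \<longrightarrow>
               c_fun \<kappa> \<tau>d y a \<psi> = c_fun \<kappa> \<tau>d y a \<theta>)}"

definition pos_equilibrium ::
  "('r::finite \<Rightarrow> real) \<Rightarrow> ('r \<Rightarrow> real^'n::finite) \<Rightarrow> ('r \<Rightarrow> real^'n) \<Rightarrow> real^'n \<Rightarrow> bool" where
  "pos_equilibrium \<kappa> y v x \<longleftrightarrow>
     pos_vec x \<and> (\<Sum>i\<in>UNIV. (\<kappa> i * mpow x (y i)) *\<^sub>R v i) = 0"

definition complex_balanced_eq ::
  "('r::finite \<Rightarrow> real) \<Rightarrow> ('r \<Rightarrow> real^'n::finite) \<Rightarrow> ('r \<Rightarrow> real^'n) \<Rightarrow> real^'n \<Rightarrow> bool" where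
  "complex_balanced_eq \<kappa> y y' xb \<longleftrightarrow>
     pos_vec xb \<and>
     (\<forall>\<eta>\<in>range y \<union> range y'.
        (\<Sum>i\<in>{i. y i = \<eta>}. \<kappa> i * mpow xb (y i)) = (\<Sum>i\<in>{i. y' i = \<eta>}. \<kappa> i * mpow xb (y i)))"

definition complex_balanced_system ::
  "('r::finite \<Rightarrow> real) \<Rightarrow> ('r \<Rightarrow> real^'n::finite) \<Rightarrow> ('r \<Rightarrow> real^'n) \<Rightarrow> bool" where
  "complex_balanced_system \<kappa> y y' \<longleftrightarrow>
     (\<forall>i. 0 < \<kappa> i \<and> nonneg_vec (y i) \<and> nonneg_vec (y' i)) \<and> (\<exists>xb. complex_balanced_eq \<kappa> y y' xb)"

definition lcDCB1 ::
  "('r::finite \<Rightarrow> real) \<Rightarrow> ('r \<Rightarrow> real) \<Rightarrow> ('r \<Rightarrow> real^'n::finite) \<Rightarrow> ('r \<Rightarrow> real^'n) \<Rightarrow> bool" where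
  "lcDCB1 \<kappa> \<tau>d y v \<longleftrightarrow> delayed_mas \<kappa> \<tau>d y v \<and>
     (\<exists>vt \<kappa>t. complex_balanced_system \<kappa>t y (\<lambda>i. y i + vt i) \<and>
        (\<forall>i. v i = (\<kappa>t i / \<kappa> i) *\<^sub>R vt i \<and> \<kappa>t i / \<kappa> i \<le> 1))"

end

theory Submission
  imports Defs
begin

text \<open>Positive equilibria are described through the reference complex balanced system with
  equilibrium \<open>xb\<close>: they are exactly the \<open>x > 0\<close> with \<open>ln x - ln xb\<close> orthogonal to the
  stoichiometric subspace \<open>S\<close> (Horn--Jackson: if \<open>d i\<close> is the pairing of the \<open>i\<close>-th reaction
  vector with \<open>ln x - ln xb\<close>, complex balance turns a vanishing flux into
  \<open>\<Sum>i. c i (exp (d i) - 1 - d i) = 0\<close> with \<open>c i > 0\<close>).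
  A constant history \<open>x\<close> lies in the compatibility class of \<open>\<theta>\<close> iff \<open>a \<bullet> C x = a \<bullet> T\<close> for all
  \<open>a \<in> S\<^sup>\<bottom>\<close>, where \<open>C x = x + \<Sum>i. \<kappa> i \<tau>d i x\<^bsup>y i\<^esup> y i\<close> and \<open>T\<close> is a positive vector plus a nonnegative
  combination of reactant complexes.  With \<open>x = xb exp \<mu>\<close>, the map \<open>\<mu> \<mapsto> C x - T\<close> is the gradient of
  the coercive convex function
  \<open>F \<mu> = \<Sum>j. xb\<^sub>j exp \<mu>\<^sub>j + \<Sum>i. \<kappa> i \<tau>d i xb\<^bsup>y i\<^esup> exp (y i \<bullet> \<mu>) - \<mu> \<bullet> T\<close>,
  so a minimiser of \<open>F\<close> on \<open>S\<^sup>\<bottom>\<close> is an equilibrium in the class; uniqueness follows from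
  the monotonicity of \<open>C\<close> in logarithmic coordinates.\<close>

definition ln_vec :: "real^'n \<Rightarrow> real^'n" where
  "ln_vec x = (\<chi> j. ln (x $ j))"

lemma mpow_eq_exp_inner_ln_vec:
  assumes "pos_vec x"
  shows "mpow x y = exp (y \<bullet> ln_vec x)"
proof -
  have "mpow x y = (\<Prod>j\<in>UNIV. exp (y $ j * ln (x $ j)))"
    unfolding mpow_def
  proof (rule prod.cong[OF refl])
    fix j
    have "0 < x $ j" using assms unfolding pos_vec_def by auto
    then show "(if y $ j = 0 then 1 else x $ j powr y $ j) = exp (y $ j * ln (x $ j))"
      by (auto simp: powr_def)
  qed
  also have "\<dots> = exp (y \<bullet> ln_vec x)"
    by (simp add: exp_sum inner_vec_def ln_vec_def)
  finally show ?thesis .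
qed

lemma mpow_nonneg: "0 \<le> mpow x y"
  unfolding mpow_def by (rule prod_nonneg) auto

lemma mpow_pos: "pos_vec x \<Longrightarrow> 0 < mpow x y"
  by (simp add: mpow_eq_exp_inner_ln_vec)

lemma exp_ge_tangent:
  fixes a b s :: real
  assumes "0 < a" "0 < b"
  shows "b * (1 + s - ln (b / a)) \<le> a * exp s"
proof -
  have "1 + (s - ln (b / a)) \<le> exp (s - ln (b / a))"
    by (rule exp_ge_add_one_self)
  also have "\<dots> = a / b * exp s"
    using assms by (simp add: exp_diff)
  finally show ?thesis
    using assms by (simp add: field_simps)
qed

lemma exp_minus_linear_bounded_below:
  fixes r q :: real
  assumes "0 \<le> r" "0 \<le> q" "r = 0 \<Longrightarrow> q = 0"
  shows "\<exists>D. \<forall>s. D \<le> r * exp s - q * s"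
proof (cases "q = 0")
  case True
  then show ?thesis using assms by (intro exI[of _ 0]) auto
next
  case False
  then have "0 < q" "0 < r" using assms by (auto simp: less_le)
  then show ?thesis
    using exp_ge_tangent[of r q] by (intro exI[of _ "q * (1 - ln (q / r))"]) (auto simp: algebra_simps)
qed

lemma exp_minus_linear_sublevel_bounded:
  fixes a p K :: real
  assumes "0 < a" "0 < p"
  shows "\<exists>B. \<forall>s. a * exp s - p * s \<le> K \<longrightarrow> \<bar>s\<bar> \<le> B"
proof -
  define B where "B = max (K / p) ((K - 2 * p * (1 - ln (2 * p / a))) / p)"
  have "\<bar>s\<bar> \<le> B" if sub: "a * exp s - p * s \<le> K" for s
  proof (cases "s < 0")
    case True
    have "0 < a * exp s" using \<open>0 < a\<close> by simp
    then have "- p * s \<le> K" using sub by linarith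
    then have "- s \<le> K / p" using \<open>0 < p\<close> by (simp add: field_simps)
    then show ?thesis using True unfolding B_def by linarith
  next
    case False
    \<comment> \<open>the tangent of slope 2p dominates p s by a linear margin\<close>
    have "2 * p * (1 + s - ln (2 * p / a)) \<le> a * exp s"
      using exp_ge_tangent[of a "2 * p" s] assms by simp
    then have "p * s \<le> K - 2 * p * (1 - ln (2 * p / a))"
      using sub by (simp add: algebra_simps)
    then have "s \<le> (K - 2 * p * (1 - ln (2 * p / a))) / p"
      using \<open>0 < p\<close> by (simp add: field_simps)
    then show ?thesis using False unfolding B_def by linarith
  qed
  then show ?thesis by blast
qed

lemma ln_diff_mult_diff_nonneg:
  fixes u w :: real
  assumes "0 < u" "0 < w"
  shows "0 \<le> (ln u - ln w) * (u - w)"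
  using assms by (cases u w rule: linorder_cases) (auto intro: mult_nonpos_nonpos)

lemma exp_diff_mult_diff_nonneg:
  fixes s t :: real
  shows "0 \<le> (exp s - exp t) * (s - t)"
  by (cases s t rule: linorder_cases) (auto intro: mult_nonpos_nonpos)

lemma closed_attains_inf_bounded_sublevel:
  fixes \<Phi> :: "'a::heine_borel \<Rightarrow> real"
  assumes "closed W" "\<mu>0 \<in> W" "continuous_on UNIV \<Phi>" "bounded {\<mu>. \<Phi> \<mu> \<le> \<Phi> \<mu>0}"
  shows "\<exists>m\<in>W. \<forall>\<mu>\<in>W. \<Phi> m \<le> \<Phi> \<mu>"
proof -
  define Z where "Z = W \<inter> {\<mu>. \<Phi> \<mu> \<le> \<Phi> \<mu>0}"
  have "compact Z"
    unfolding Z_def using assms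
    unfolding compact_eq_bounded_closed
    by (intro conjI closed_Int bounded_Int closed_Collect_le) (auto intro: continuous_on_const)
  moreover have "\<mu>0 \<in> Z" using assms by (simp add: Z_def)
  ultimately obtain m where "m \<in> Z" and m: "\<forall>\<mu>\<in>Z. \<Phi> m \<le> \<Phi> \<mu>"
    using continuous_attains_inf[of Z \<Phi>] continuous_on_subset[OF assms(3)] by blast
  then have "\<Phi> m \<le> \<Phi> \<mu>" if "\<mu> \<in> W" for \<mu>
    using that \<open>\<mu>0 \<in> Z\<close> by (cases "\<mu> \<in> Z") (fastforce simp: Z_def)+
  then show ?thesis using \<open>m \<in> Z\<close> by (auto simp: Z_def)
qed

lemma subspace_min_directional_derivative_eq_0:
  assumes "subspace W" "m \<in> W" "a \<in> W" "\<forall>\<mu>\<in>W. \<Phi> m \<le> \<Phi> \<mu>"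
    and "((\<lambda>t. \<Phi> (m + t *\<^sub>R a)) has_real_derivative l) (at 0)"
  shows "l = 0"
proof (rule DERIV_local_min[OF assms(5) zero_less_one], intro allI impI)
  fix t :: real
  have "m + t *\<^sub>R a \<in> W" using assms by (simp add: subspace_add subspace_scale)
  then show "\<Phi> (m + 0 *\<^sub>R a) \<le> \<Phi> (m + t *\<^sub>R a)" using assms(4) by simp
qed

lemma complex_balanced_sum_products_eq_sum_reactants:
  fixes F :: "real^'n::finite \<Rightarrow> 'a::real_vector" and y y' :: "'r::finite \<Rightarrow> real^'n"
  assumes "complex_balanced_eq k y y' xb"
  shows "(\<Sum>i\<in>UNIV. (k i * mpow xb (y i)) *\<^sub>R F (y' i)) = (\<Sum>i\<in>UNIV. (k i * mpow xb (y i)) *\<^sub>R F (y i))"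
proof -
  define C where "C = range y \<union> range y'"
  define c where "c i = k i * mpow xb (y i)" for i
  have "finite C" unfolding C_def by auto
  have "(\<Sum>i\<in>UNIV. c i *\<^sub>R F (y' i)) = (\<Sum>\<eta>\<in>C. (\<Sum>i\<in>{i. y' i = \<eta>}. c i) *\<^sub>R F \<eta>)"
    by (subst sum.group[symmetric, of UNIV C y']) (auto simp: C_def \<open>finite C\<close> scaleR_sum_left intro!: sum.cong)
  also have "\<dots> = (\<Sum>\<eta>\<in>C. (\<Sum>i\<in>{i. y i = \<eta>}. c i) *\<^sub>R F \<eta>)"
    using assms unfolding complex_balanced_eq_def C_def c_def by (intro sum.cong) auto
  also have "\<dots> = (\<Sum>i\<in>UNIV. c i *\<^sub>R F (y i))"
    by (subst sum.group[symmetric, of UNIV C y]) (auto simp: C_def \<open>finite C\<close> scaleR_sum_left intro!: sum.cong)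
  finally show ?thesis unfolding c_def .
qed

lemma complex_balanced_flux_eq_0:
  assumes "complex_balanced_eq k y (\<lambda>i. y i + w i) xb" "\<forall>i. w i \<bullet> \<mu> = 0"
  shows "(\<Sum>i\<in>UNIV. (k i * mpow xb (y i) * exp (y i \<bullet> \<mu>)) *\<^sub>R w i) = 0"
proof -
  define c where "c i = k i * mpow xb (y i)" for i
  have "(\<Sum>i\<in>UNIV. (c i * exp (y i \<bullet> \<mu>)) *\<^sub>R w i)
      = (\<Sum>i\<in>UNIV. c i *\<^sub>R (exp ((y i + w i) \<bullet> \<mu>) *\<^sub>R (y i + w i)))
        - (\<Sum>i\<in>UNIV. c i *\<^sub>R (exp (y i \<bullet> \<mu>) *\<^sub>R y i))"
    unfolding sum_subtractf[symmetric] using assms(2)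
    by (intro sum.cong) (simp_all add: inner_add_left scaleR_add_right)
  also have "\<dots> = 0"
    using complex_balanced_sum_products_eq_sum_reactants[OF assms(1), of "\<lambda>\<eta>. exp (\<eta> \<bullet> \<mu>) *\<^sub>R \<eta>"]
    by (simp add: c_def)
  finally show ?thesis by (simp add: c_def)
qed

lemma complex_balanced_flux_eq_0_imp_orthogonal:
  assumes cb: "complex_balanced_eq k y (\<lambda>i. y i + w i) xb" and k: "\<forall>i. 0 < k i"
    and flux: "(\<Sum>i\<in>UNIV. (k i * mpow xb (y i) * exp (y i \<bullet> \<mu>)) *\<^sub>R w i) = 0"
  shows "w i \<bullet> \<mu> = 0"
proof -
  define c where "c i = k i * mpow xb (y i) * exp (y i \<bullet> \<mu>)" for i
  define d where "d i = w i \<bullet> \<mu>" for i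
  have c_pos: "0 < c i" for i
    using k cb by (simp add: c_def complex_balanced_eq_def mpow_pos)
  have "(\<Sum>i\<in>UNIV. c i * d i) = \<mu> \<bullet> (\<Sum>i\<in>UNIV. c i *\<^sub>R w i)"
    by (simp add: inner_sum_right d_def inner_commute)
  then have linear: "(\<Sum>i\<in>UNIV. c i * d i) = 0" using flux by (simp add: c_def)
  have "(\<Sum>i\<in>UNIV. c i * exp (d i)) = (\<Sum>i\<in>UNIV. c i)"
    using complex_balanced_sum_products_eq_sum_reactants[OF cb, of "\<lambda>\<eta>. exp (\<eta> \<bullet> \<mu>)"]
    by (simp add: c_def d_def inner_add_left exp_add mult.assoc)
  \<comment> \<open>so the nonnegative terms c i (e^(d i) - 1 - d i) sum to zero\<close>
  then have "(\<Sum>i\<in>UNIV. c i * (exp (d i) - 1 - d i)) = 0"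
    using linear by (simp add: right_diff_distrib sum_subtractf)
  moreover have "\<forall>i\<in>UNIV. 0 \<le> c i * (exp (d i) - 1 - d i)"
  proof
    fix i
    have "0 \<le> exp (d i) - 1 - d i" using exp_ge_add_one_self[of "d i"] by linarith
    then show "0 \<le> c i * (exp (d i) - 1 - d i)" using c_pos[of i] by simp
  qed
  ultimately have "c i * (exp (d i) - 1 - d i) = 0"
    by (simp add: sum_nonneg_eq_0_iff)
  then have "\<not> 1 - (- d i) < exp (- (- d i))" using c_pos[of i] by simp
  then show ?thesis using exp_minus_greater[of "- d i"] by (simp add: d_def)
qed

locale dcb1_system =
  fixes \<kappa> \<tau>d \<kappa>t :: "'r::finite \<Rightarrow> real" and y v vt :: "'r \<Rightarrow> real^'n::finite"
    and xb :: "real^'n"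
  assumes delayed: "delayed_mas \<kappa> \<tau>d y v"
    and reference_rates_pos: "\<forall>i. 0 < \<kappa>t i"
    and reference_balanced: "complex_balanced_eq \<kappa>t y (\<lambda>i. y i + vt i) xb"
    and reaction_vectors: "\<forall>i. v i = (\<kappa>t i / \<kappa> i) *\<^sub>R vt i"

lemma lcDCB1_imp_dcb1_system:
  assumes "lcDCB1 \<kappa> \<tau>d y v"
  shows "\<exists>\<kappa>t vt xb. dcb1_system \<kappa> \<tau>d \<kappa>t y v vt xb"
  using assms unfolding lcDCB1_def complex_balanced_system_def dcb1_system_def by blast

context dcb1_system
begin

lemma rate_pos: "0 < \<kappa> i"
  using delayed by (simp add: delayed_mas_def)

lemma delay_nonneg: "0 \<le> \<tau>d i"
  using delayed by (simp add: delayed_mas_def)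

lemma pos_vec_xb: "pos_vec xb"
  using reference_balanced by (simp add: complex_balanced_eq_def)

lemma orthogonal_comp_stoich_subspace_iff:
  "\<mu> \<in> (stoich_subspace v)\<^sup>\<bottom> \<longleftrightarrow> (\<forall>i. vt i \<bullet> \<mu> = 0)"
proof
  assume "\<mu> \<in> (stoich_subspace v)\<^sup>\<bottom>"
  then have "v i \<bullet> \<mu> = 0" for i
    using span_base[of "v i" "range v"]
    by (simp add: orthogonal_comp_def orthogonal_def stoich_subspace_def)
  then have "(\<kappa>t i / \<kappa> i) * (vt i \<bullet> \<mu>) = 0" for i
    using reaction_vectors by (metis inner_scaleR_left)
  then show "\<forall>i. vt i \<bullet> \<mu> = 0"
    using rate_pos reference_rates_pos by (simp add: less_imp_neq[THEN not_sym])
next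
  assume vt: "\<forall>i. vt i \<bullet> \<mu> = 0"
  have "orthogonal \<mu> w" if "w \<in> span (range v)" for w
  proof (rule orthogonal_to_span[OF that])
    fix z assume "z \<in> range v"
    then show "orthogonal \<mu> z"
      using vt reaction_vectors by (auto simp: orthogonal_def inner_commute)
  qed
  then show "\<mu> \<in> (stoich_subspace v)\<^sup>\<bottom>"
    by (auto simp: orthogonal_comp_def stoich_subspace_def orthogonal_def inner_commute)
qed

lemma flux_eq_reference_flux:
  assumes "pos_vec x"
  shows "(\<Sum>i\<in>UNIV. (\<kappa> i * mpow x (y i)) *\<^sub>R v i)
    = (\<Sum>i\<in>UNIV. (\<kappa>t i * mpow xb (y i) * exp (y i \<bullet> (ln_vec x - ln_vec xb))) *\<^sub>R vt i)"
proof (rule sum.cong[OF refl])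
  fix i
  have "mpow x (y i) = mpow xb (y i) * exp (y i \<bullet> (ln_vec x - ln_vec xb))"
    using mpow_eq_exp_inner_ln_vec[OF assms] mpow_eq_exp_inner_ln_vec[OF pos_vec_xb]
    by (simp add: inner_diff_right exp_diff)
  then show "(\<kappa> i * mpow x (y i)) *\<^sub>R v i
      = (\<kappa>t i * mpow xb (y i) * exp (y i \<bullet> (ln_vec x - ln_vec xb))) *\<^sub>R vt i"
    using reaction_vectors rate_pos[of i] by simp
qed

lemma pos_equilibrium_iff_ln_diff_orthogonal:
  assumes "pos_vec x"
  shows "pos_equilibrium \<kappa> y v x \<longleftrightarrow> ln_vec x - ln_vec xb \<in> (stoich_subspace v)\<^sup>\<bottom>"
  unfolding pos_equilibrium_def orthogonal_comp_stoich_subspace_iff flux_eq_reference_flux[OF assms]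
  using assms complex_balanced_flux_eq_0[OF reference_balanced]
    complex_balanced_flux_eq_0_imp_orthogonal[OF reference_balanced reference_rates_pos]
  by blast

definition conserved_vector :: "real^'n \<Rightarrow> real^'n" where
  "conserved_vector x = x + (\<Sum>i\<in>UNIV. (\<kappa> i * \<tau>d i * mpow x (y i)) *\<^sub>R y i)"

lemma c_fun_const: "c_fun \<kappa> \<tau>d y a (\<lambda>s. x) = a \<bullet> conserved_vector x"
  unfolding c_fun_def conserved_vector_def
  by (simp add: integral_const_real content_real delay_nonneg mult.assoc)

lemma const_mem_compat_class_iff:
  assumes "pos_vec x"
  shows "(\<lambda>s. x) \<in> compat_class \<kappa> \<tau>d y v \<tau> \<theta>
    \<longleftrightarrow> (\<forall>a\<in>(stoich_subspace v)\<^sup>\<bottom>. a \<bullet> conserved_vector x = c_fun \<kappa> \<tau>d y a \<theta>)"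
  using assms
  by (auto simp: compat_class_def orthogonal_comp_def orthogonal_def inner_commute c_fun_const
      nonneg_vec_def pos_vec_def less_imp_le)

lemma c_fun_decomposition:
  assumes "\<forall>i. \<tau>d i \<le> \<tau>" "\<forall>s\<in>{-\<tau>..0}. pos_vec (\<theta> s)"
  obtains p q where "pos_vec p" "\<And>i. 0 \<le> q i" "\<And>i. \<tau>d i = 0 \<Longrightarrow> q i = 0"
    "\<And>a. c_fun \<kappa> \<tau>d y a \<theta> = a \<bullet> (p + (\<Sum>i\<in>UNIV. q i *\<^sub>R y i))"
proof
  define q where "q i = \<kappa> i * integral {- \<tau>d i..0} (\<lambda>s. mpow (\<theta> s) (y i))" for i
  have "0 \<le> \<tau>" using delay_nonneg assms(1) by (meson order_trans)
  then show "pos_vec (\<theta> 0)" using assms(2) by simp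
  show "0 \<le> q i" for i
  proof -
    have "0 \<le> integral {- \<tau>d i..0} (\<lambda>s. mpow (\<theta> s) (y i))"
      by (cases "(\<lambda>s. mpow (\<theta> s) (y i)) integrable_on {- \<tau>d i..0}")
        (auto intro: integral_nonneg mpow_nonneg simp: not_integrable_integral)
    then show ?thesis using rate_pos[of i] by (simp add: q_def)
  qed
  show "\<tau>d i = 0 \<Longrightarrow> q i = 0" for i by (simp add: q_def)
  show "c_fun \<kappa> \<tau>d y a \<theta> = a \<bullet> (\<theta> 0 + (\<Sum>i\<in>UNIV. q i *\<^sub>R y i))" for a
    by (simp add: c_fun_def q_def)
qed

definition scaled_state :: "real^'n \<Rightarrow> real^'n" where
  "scaled_state \<mu> = (\<chi> j. xb $ j * exp (\<mu> $ j))"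

lemma pos_vec_scaled_state: "pos_vec (scaled_state \<mu>)"
  using pos_vec_xb by (simp add: pos_vec_def scaled_state_def)

lemma ln_vec_scaled_state: "ln_vec (scaled_state \<mu>) = ln_vec xb + \<mu>"
  using pos_vec_xb
  by (simp add: pos_vec_def scaled_state_def ln_vec_def vec_eq_iff ln_mult less_imp_neq[THEN not_sym])

lemma mpow_scaled_state: "mpow (scaled_state \<mu>) z = mpow xb z * exp (z \<bullet> \<mu>)"
  by (simp add: mpow_eq_exp_inner_ln_vec pos_vec_scaled_state pos_vec_xb ln_vec_scaled_state
      inner_add_right exp_add)

definition free_energy :: "real^'n \<Rightarrow> real^'n \<Rightarrow> real" where
  "free_energy T \<mu> = (\<Sum>j\<in>UNIV. xb $ j * exp (\<mu> $ j))
     + (\<Sum>i\<in>UNIV. \<kappa> i * \<tau>d i * mpow xb (y i) * exp (y i \<bullet> \<mu>)) - \<mu> \<bullet> T"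

lemma continuous_on_free_energy: "continuous_on UNIV (free_energy T)"
  unfolding free_energy_def by (intro continuous_intros)

lemma free_energy_directional_derivative:
  "((\<lambda>t. free_energy T (\<mu> + t *\<^sub>R a)) has_real_derivative
     a \<bullet> conserved_vector (scaled_state \<mu>) - a \<bullet> T) (at 0)"
proof -
  have "free_energy T (\<mu> + t *\<^sub>R a) = (\<Sum>j\<in>UNIV. xb $ j * exp (\<mu> $ j + t * a $ j))
     + (\<Sum>i\<in>UNIV. \<kappa> i * \<tau>d i * mpow xb (y i) * exp (y i \<bullet> \<mu> + t * (y i \<bullet> a)))
     - (\<mu> \<bullet> T + t * (a \<bullet> T))" for t
    by (simp add: free_energy_def inner_add_right inner_add_left)
  moreover have "a \<bullet> conserved_vector (scaled_state \<mu>) = a \<bullet> scaled_state \<mu>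
     + (\<Sum>i\<in>UNIV. \<kappa> i * \<tau>d i * mpow (scaled_state \<mu>) (y i) * (y i \<bullet> a))"
    by (simp add: conserved_vector_def inner_add_right inner_sum_right inner_commute)
  moreover have "a \<bullet> scaled_state \<mu> = (\<Sum>j\<in>UNIV. xb $ j * exp (\<mu> $ j) * a $ j)"
    by (simp add: scaled_state_def inner_vec_def ac_simps)
  ultimately show ?thesis
    by (simp add: mpow_scaled_state) (rule derivative_eq_intros refl | simp add: ac_simps)+
qed

lemma bounded_free_energy_sublevel:
  assumes p: "pos_vec p" and q: "\<And>i. 0 \<le> q i" "\<And>i. \<tau>d i = 0 \<Longrightarrow> q i = 0"
  shows "bounded {\<mu>. free_energy (p + (\<Sum>i\<in>UNIV. q i *\<^sub>R y i)) \<mu> \<le> c}"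
proof -
  define r where "r i = \<kappa> i * \<tau>d i * mpow xb (y i)" for i
  define h where "h j s = xb $ j * exp s - p $ j * s" for j s
  define k where "k i s = r i * exp s - q i * s" for i s
  have xb: "0 < xb $ j" and pj: "0 < p $ j" for j
    using pos_vec_xb p by (auto simp: pos_vec_def)
  have r: "0 \<le> r i" "r i = 0 \<Longrightarrow> q i = 0" for i
    using rate_pos[of i] delay_nonneg[of i] mpow_pos[OF pos_vec_xb, of "y i"] q(2)[of i]
    by (auto simp: r_def)
  have "\<mu> \<bullet> (p + (\<Sum>i\<in>UNIV. q i *\<^sub>R y i)) = (\<Sum>j\<in>UNIV. p $ j * \<mu> $ j) + (\<Sum>i\<in>UNIV. q i * (y i \<bullet> \<mu>))"
    for \<mu>
    by (simp add: inner_add_right inner_sum_right inner_commute) (simp add: inner_vec_def mult.commute)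
  then have split: "free_energy (p + (\<Sum>i\<in>UNIV. q i *\<^sub>R y i)) \<mu>
      = (\<Sum>j\<in>UNIV. h j (\<mu> $ j)) + (\<Sum>i\<in>UNIV. k i (y i \<bullet> \<mu>))" for \<mu>
    by (simp add: free_energy_def h_def k_def r_def sum_subtractf)
  have "\<exists>D. \<forall>s. D \<le> h j s" for j
    using exp_minus_linear_bounded_below[of "xb $ j" "p $ j"] xb[of j] pj[of j]
    unfolding h_def by (auto simp: less_imp_le)
  then obtain Dh where Dh: "\<And>j s. Dh j \<le> h j s" by metis
  have "\<exists>D. \<forall>s. D \<le> k i s" for i
    using exp_minus_linear_bounded_below[OF r(1) q(1) r(2)] unfolding k_def .
  then obtain Dk where Dk: "\<And>i s. Dk i \<le> k i s" by metis
  define K where "K j = c - sum Dk UNIV - sum Dh UNIV + Dh j" for j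
  have "\<exists>b. \<forall>s. h j s \<le> K j \<longrightarrow> \<bar>s\<bar> \<le> b" for j
    using exp_minus_linear_sublevel_bounded[OF xb pj] unfolding h_def .
  then obtain B where B: "\<And>j s. h j s \<le> K j \<Longrightarrow> \<bar>s\<bar> \<le> B j" by metis
  have "\<bar>\<mu> $ j\<bar> \<le> B j" if "free_energy (p + (\<Sum>i\<in>UNIV. q i *\<^sub>R y i)) \<mu> \<le> c" for \<mu> j
  proof -
    have "sum Dk UNIV \<le> (\<Sum>i\<in>UNIV. k i (y i \<bullet> \<mu>))" by (rule sum_mono) (rule Dk)
    moreover have "h j (\<mu> $ j) - Dh j \<le> (\<Sum>l\<in>UNIV. h l (\<mu> $ l) - Dh l)"
      by (rule member_le_sum) (auto simp: Dh)
    ultimately have "h j (\<mu> $ j) \<le> K j"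
      using that split[of \<mu>] by (simp add: K_def sum_subtractf)
    then show ?thesis by (rule B)
  qed
  then show ?thesis
    by (intro boundedI[where B = "sum B UNIV"])
      (auto intro: order_trans[OF norm_le_l1_cart sum_mono])
qed

lemma exists_equilibrium_with_conserved_vector:
  assumes "pos_vec p" "\<And>i. 0 \<le> q i" "\<And>i. \<tau>d i = 0 \<Longrightarrow> q i = 0"
  defines "T \<equiv> p + (\<Sum>i\<in>UNIV. q i *\<^sub>R y i)"
  shows "\<exists>x. pos_vec x \<and> ln_vec x - ln_vec xb \<in> (stoich_subspace v)\<^sup>\<bottom>
    \<and> (\<forall>a\<in>(stoich_subspace v)\<^sup>\<bottom>. a \<bullet> conserved_vector x = a \<bullet> T)"
proof -
  have W: "subspace ((stoich_subspace v)\<^sup>\<bottom>)" by (rule subspace_orthogonal_comp)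
  obtain m where m: "m \<in> (stoich_subspace v)\<^sup>\<bottom>"
    and min: "\<forall>\<mu>\<in>(stoich_subspace v)\<^sup>\<bottom>. free_energy T m \<le> free_energy T \<mu>"
    using closed_attains_inf_bounded_sublevel[OF closed_subspace[OF W] subspace_0[OF W]
        continuous_on_free_energy bounded_free_energy_sublevel[of p q, OF assms(1-3)]]
    unfolding T_def by blast
  have "a \<bullet> conserved_vector (scaled_state m) - a \<bullet> T = 0" if "a \<in> (stoich_subspace v)\<^sup>\<bottom>" for a
    by (rule subspace_min_directional_derivative_eq_0[OF W m that min
          free_energy_directional_derivative])
  then show ?thesis
    using pos_vec_scaled_state ln_vec_scaled_state m by (intro exI[of _ "scaled_state m"]) auto
qed

lemma conserved_vector_inj_on_equilibria:
  assumes pos: "pos_vec x1" "pos_vec x2"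
    and eq: "ln_vec x1 - ln_vec xb \<in> (stoich_subspace v)\<^sup>\<bottom>" "ln_vec x2 - ln_vec xb \<in> (stoich_subspace v)\<^sup>\<bottom>"
    and same: "\<forall>a\<in>(stoich_subspace v)\<^sup>\<bottom>. a \<bullet> conserved_vector x1 = a \<bullet> conserved_vector x2"
  shows "x1 = x2"
proof -
  define \<mu> where "\<mu> = ln_vec x1 - ln_vec x2"
  define f where "f j = (ln (x1 $ j) - ln (x2 $ j)) * (x1 $ j - x2 $ j)" for j
  define g where "g i = \<kappa> i * \<tau>d i *
    ((exp (y i \<bullet> ln_vec x1) - exp (y i \<bullet> ln_vec x2)) * (y i \<bullet> ln_vec x1 - y i \<bullet> ln_vec x2))" for i
  have "\<mu> = (ln_vec x1 - ln_vec xb) - (ln_vec x2 - ln_vec xb)" by (simp add: \<mu>_def)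
  then have "\<mu> \<in> (stoich_subspace v)\<^sup>\<bottom>"
    using subspace_diff[OF subspace_orthogonal_comp eq] by simp
  then have "0 = \<mu> \<bullet> (conserved_vector x1 - conserved_vector x2)"
    using same by (simp add: inner_diff_right)
  also have "\<dots> = \<mu> \<bullet> (x1 - x2) + (\<Sum>i\<in>UNIV. \<kappa> i * \<tau>d i *
      ((mpow x1 (y i) - mpow x2 (y i)) * (y i \<bullet> \<mu>)))"
    by (simp add: conserved_vector_def inner_sum_right sum_subtractf[symmetric] inner_commute
        algebra_simps)
  also have "\<mu> \<bullet> (x1 - x2) = (\<Sum>j\<in>UNIV. f j)"
    by (simp add: inner_vec_def \<mu>_def ln_vec_def f_def)
  also have "(\<Sum>i\<in>UNIV. \<kappa> i * \<tau>d i * ((mpow x1 (y i) - mpow x2 (y i)) * (y i \<bullet> \<mu>)))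
      = (\<Sum>i\<in>UNIV. g i)"
    by (simp add: g_def \<mu>_def inner_diff_right mpow_eq_exp_inner_ln_vec[OF pos(1)]
        mpow_eq_exp_inner_ln_vec[OF pos(2)])
  finally have sum_eq_0: "(\<Sum>j\<in>UNIV. f j) + (\<Sum>i\<in>UNIV. g i) = 0" ..
  have f: "0 \<le> f j" for j
    using pos ln_diff_mult_diff_nonneg by (simp add: pos_vec_def f_def)
  have "0 \<le> g i" for i
    using rate_pos[of i] delay_nonneg[of i] exp_diff_mult_diff_nonneg by (simp add: g_def)
  then have "0 \<le> (\<Sum>i\<in>UNIV. g i)" and "0 \<le> (\<Sum>j\<in>UNIV. f j)"
    using f by (simp_all add: sum_nonneg)
  then have "(\<Sum>j\<in>UNIV. f j) = 0"
    using sum_eq_0 by linarith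
  then have "f j = 0" for j using f by (simp add: sum_nonneg_eq_0_iff)
  then show ?thesis
    using pos by (simp add: pos_vec_def f_def vec_eq_iff)
qed

lemma ex1_equilibrium_with_conserved_vector:
  assumes "pos_vec p" "\<And>i. 0 \<le> q i" "\<And>i. \<tau>d i = 0 \<Longrightarrow> q i = 0"
  defines "T \<equiv> p + (\<Sum>i\<in>UNIV. q i *\<^sub>R y i)"
  shows "\<exists>!x. pos_vec x \<and> ln_vec x - ln_vec xb \<in> (stoich_subspace v)\<^sup>\<bottom>
    \<and> (\<forall>a\<in>(stoich_subspace v)\<^sup>\<bottom>. a \<bullet> conserved_vector x = a \<bullet> T)"
proof -
  obtain x where x: "pos_vec x" "ln_vec x - ln_vec xb \<in> (stoich_subspace v)\<^sup>\<bottom>"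
    "\<forall>a\<in>(stoich_subspace v)\<^sup>\<bottom>. a \<bullet> conserved_vector x = a \<bullet> T"
    using exists_equilibrium_with_conserved_vector[of p q, OF assms(1-3)] unfolding T_def by blast
  show ?thesis
  proof (rule ex1I[of _ x])
    fix x' assume "pos_vec x' \<and> ln_vec x' - ln_vec xb \<in> (stoich_subspace v)\<^sup>\<bottom>
      \<and> (\<forall>a\<in>(stoich_subspace v)\<^sup>\<bottom>. a \<bullet> conserved_vector x' = a \<bullet> T)"
    then show "x' = x"
      using x by (intro conserved_vector_inj_on_equilibria) simp_all
  qed (use x in blast)
qed

lemma pos_equilibrium_in_compat_class_iff:
  assumes "\<And>a. c_fun \<kappa> \<tau>d y a \<theta> = a \<bullet> T"
  shows "pos_equilibrium \<kappa> y v x \<and> (\<lambda>s. x) \<in> compat_class \<kappa> \<tau>d y v \<tau> \<theta>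
      \<longleftrightarrow> pos_vec x \<and> ln_vec x - ln_vec xb \<in> (stoich_subspace v)\<^sup>\<bottom>
        \<and> (\<forall>a\<in>(stoich_subspace v)\<^sup>\<bottom>. a \<bullet> conserved_vector x = a \<bullet> T)"
  using pos_equilibrium_iff_ln_diff_orthogonal const_mem_compat_class_iff assms
  by (auto simp: pos_equilibrium_def)

end

theorem mainTheorem6:
  fixes \<kappa> \<tau>d :: "'r::finite \<Rightarrow> real" and y v :: "'r \<Rightarrow> real^'n::finite"
    and \<tau> :: real and \<theta> :: "real \<Rightarrow> real^'n"
  assumes "lcDCB1 \<kappa> \<tau>d y v"
    and "\<forall>i. \<tau>d i \<le> \<tau>"
    and "continuous_on {-\<tau>..0} \<theta>"
    and "\<forall>s\<in>{-\<tau>..0}. pos_vec (\<theta> s)"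
  shows "\<exists>!x. pos_equilibrium \<kappa> y v x \<and> (\<lambda>s. x) \<in> compat_class \<kappa> \<tau>d y v \<tau> \<theta>"
proof -
  obtain \<kappa>t vt xb where "dcb1_system \<kappa> \<tau>d \<kappa>t y v vt xb"
    using lcDCB1_imp_dcb1_system[OF assms(1)] by blast
  then interpret dcb1_system \<kappa> \<tau>d \<kappa>t y v vt xb .
  obtain p q where p: "pos_vec p" and q: "\<And>i. 0 \<le> q i" "\<And>i. \<tau>d i = 0 \<Longrightarrow> q i = 0"
    and c_fun_\<theta>: "\<And>a. c_fun \<kappa> \<tau>d y a \<theta> = a \<bullet> (p + (\<Sum>i\<in>UNIV. q i *\<^sub>R y i))"
    using c_fun_decomposition[OF assms(2,4)] by blast
  show ?thesis
    unfolding pos_equilibrium_in_compat_class_iff[OF c_fun_\<theta>]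
    by (rule ex1_equilibrium_with_conserved_vector[of p q, OF p q])
qed

end
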